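(* Suppose $P=P_{(a,b)}$ is a point of $\mathcal X_3$ such that $\alpha(P)^2-\alpha(P)+1=0$. Then for every positive integer $i$ with $i\le m-2$ there exists a function $g_i\in L((3i+3)D_\infty)$ with $v_P(g_i)=3i+2$.
   Context: Let $q$ be a prime power with $q\equiv2\pmod3$, $m=(q+1)/3$, and let $\mathcal X_3$ be the nonsingular projective model (defined over $\mathbb F_{q^2}$) of the plane curve $y^{q+1}+x^{2m}+x^m=0$. Let $P_\infty^1,\dots,P_\infty^m$ be the $m$ points of $\mathcal X_3$ lying over the point at infinity (poles of $x$), $D_\infty=\sum_jP_\infty^j$, and $L(D)$ the Riemann–Roch space of $D$. Points not centered at $(0,0)$ or at infinity have affine coordinates $(a,b)$, $a\ne0$, and are denoted $P_{(a,b)}$; for such points with $a^m\neq -1$, $\alpha(P_{(a,b)})=a^m/(1+a^m)$. $v_P$ is the valuation at $P$. *)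

theory Defs
  imports "HOL-Computational_Algebra.Polynomial" "HOL-Computational_Algebra.Fraction_Field"
begin

text \<open>The function field of X_3 over the field 'k is modelled as K(x)[Y]/(f) with
  K(x) = 'k poly fract and f = Y^(q+1) + x^(2m) + x^m.  A function is represented
  by any element of K(x)[Y]; two representatives denote the same function iff
  their difference is divisible by f.\<close>

definition mm :: "nat \<Rightarrow> nat" where
  "mm q = (q + 1) div 3"

definition emb :: "'k::field poly \<Rightarrow> 'k poly fract" where
  "emb c = Fract c 1"

definition xfun :: "'k::field poly fract" where
  "xfun = emb [:0, 1:]"

definition curve_poly :: "nat \<Rightarrow> 'k::field poly fract poly" where
  "curve_poly q = monom 1 (q + 1) + [: xfun ^ (2 * mm q) + xfun ^ (mm q) :]"

definition lift2 :: "'k::field poly poly \<Rightarrow> 'k poly fract poly" where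
  "lift2 w = map_poly emb w"

definition ev2 :: "'k::field poly poly \<Rightarrow> 'k \<Rightarrow> 'k \<Rightarrow> 'k" where
  "ev2 w a b = poly (map_poly (\<lambda>c. poly c a) w) b"

text \<open>Local ring O_P of the affine curve at P = (a,b): functions u/w with
  u, w polynomial in x, y and w(a,b) \<noteq> 0.\<close>
definition local_ring :: "nat \<Rightarrow> 'k::field \<Rightarrow> 'k \<Rightarrow> 'k poly fract poly \<Rightarrow> bool" where
  "local_ring q a b g \<longleftrightarrow>
     (\<exists>u w. ev2 w a b \<noteq> 0 \<and> (lift2 w * g - lift2 u) mod curve_poly q = 0)"

text \<open>v_P(g) = n (for a nonsingular affine point P=(a,b) with b \<noteq> 0, where x - a
  is a local parameter): g \<in> (x-a)^n O_P but g \<notin> (x-a)^(n+1) O_P.\<close>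
definition val_at :: "nat \<Rightarrow> 'k::field \<Rightarrow> 'k \<Rightarrow> 'k poly fract poly \<Rightarrow> nat \<Rightarrow> bool" where
  "val_at q a b g n \<longleftrightarrow>
     local_ring q a b (smult (inverse (emb [:-a, 1:] ^ n)) g) \<and>
     \<not> local_ring q a b (smult (inverse (emb [:-a, 1:] ^ (n + 1))) g)"

text \<open>Integrality over K[x] (i.e. no poles outside the places over x = \<infinity>).\<close>
definition integral_Kx :: "nat \<Rightarrow> 'k::field poly fract poly \<Rightarrow> bool" where
  "integral_Kx q g \<longleftrightarrow>
     (\<exists>p :: 'k poly poly. lead_coeff p = 1 \<and>
        poly (map_poly (\<lambda>c. [: emb c :]) p) g mod curve_poly q = 0)"

definition O_inf :: "'k::field poly fract set" where
  "O_inf = {c. \<exists>u w. w \<noteq> 0 \<and> degree u \<le> degree w \<and> c = Fract u w}"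

text \<open>Integrality over O_inf (= lying in all valuation rings of places over x = \<infinity>).\<close>
definition integral_Oinf :: "nat \<Rightarrow> 'k::field poly fract poly \<Rightarrow> bool" where
  "integral_Oinf q g \<longleftrightarrow>
     (\<exists>p :: 'k poly fract poly. lead_coeff p = 1 \<and> (\<forall>i. coeff p i \<in> O_inf) \<and>
        poly (map_poly (\<lambda>c. [: c :]) p) g mod curve_poly q = 0)"

text \<open>Membership in L(3j D_inf).  Since the pole divisor of x is 3 D_inf
  (each P_inf^j has v(x) = -3), g \<in> L(3j D_inf) iff g is integral over K[x]
  and g / x^j is integral over O_inf.\<close>
definition in_L3 :: "nat \<Rightarrow> nat \<Rightarrow> 'k::field poly fract poly \<Rightarrow> bool" where
  "in_L3 q j g \<longleftrightarrow> integral_Kx q g \<and> integral_Oinf q (smult (inverse (xfun ^ j)) g)"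

end

theory Submission
  imports Defs "HOL-Computational_Algebra.Polynomial_Factorial" "HOL-Computational_Algebra.Primes"
    "Jordan_Normal_Form.Char_Poly"
begin

text \<open>
  Write \<open>t = x - a\<close>, \<open>s = x^m\<close> and \<open>\<omega> = a^m\<close>. The condition on \<open>\<alpha>(P)\<close> says
  \<open>\<omega>^2 + \<omega> + 1 = 0\<close>, so \<open>s^2 + s + 1 = (s - \<omega>)(s - \<omega>^2)\<close> vanishes simply at \<open>P\<close> and
  \<open>a^(q+1) = b^(q+1) = 1\<close>. On the curve \<open>(y - b) G = -(s^2 + s + 1)\<close> with \<open>G(P) \<noteq> 0\<close>, so by
  Frobenius \<open>y - y\<^sub>0 = -b y (y - b)^q\<close> is divisible by \<open>t^q\<close> at \<open>P\<close>, where
  \<open>y\<^sub>0 = -b (s^2 + s) \<in> K[x]\<close>.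

  The function \<open>g\<^sub>k = (1 - y/b) c\<^sub>k + (x/a - y/b) d\<^sub>k\<close>, with \<open>c\<^sub>k, d\<^sub>k \<in> K[y]\<close> defined by a
  linear recursion such that \<open>c\<^sub>k(y\<^sub>0) + s d\<^sub>k(y\<^sub>0) = (s - \<omega>)^k\<close>, satisfies
  \<open>g\<^sub>k(y\<^sub>0) = t^(k+1) \<cdot> (unit at P)\<close> because \<open>x/a - s^3 = -x t^q\<close>; hence \<open>v\<^sub>P(g\<^sub>k) = k + 1\<close>
  for \<open>k + 1 < q\<close>. At the places over infinity \<open>x\<close> and \<open>y\<close> have pole orders 3 and 2, and
  \<open>g\<^sub>k\<close> has weighted degree \<open>k + 2\<close> in these orders. An element of \<open>K(x)[y]\<close> of weighted degree
  at most 0 lies in the valuation rings at infinity because it is integral over \<open>O\<^sub>\<infinity>\<close>, which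
  the determinant trick shows. The theorem is the case \<open>k = 3i + 1\<close>.
\<close>

lemma freshmans_dream_diff:
  fixes x y :: "'a::comm_ring_1"
  assumes "prime CHAR('a)" and "n = CHAR('a) ^ k"
  shows "(x - y) ^ n = x ^ n - y ^ n"
proof -
  have "x ^ n = ((x - y) + y) ^ n" by simp
  also have "\<dots> = (x - y) ^ n + y ^ n" by (rule freshmans_dream'[OF assms])
  finally show ?thesis by simp
qed

section \<open>Bivariate polynomials as functions on the curve\<close>

lemma emb_eq_to_fract: "emb = to_fract"
  by (simp add: fun_eq_iff emb_def to_fract_def)

lemma lift2_eq_fract_poly: "lift2 = map_poly to_fract"
  by (simp add: fun_eq_iff lift2_def emb_eq_to_fract)

lemma xfun_eq: "xfun = to_fract [:0, 1:]"
  by (simp add: xfun_def emb_eq_to_fract)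

interpretation to_fract: inj_idom_hom "to_fract :: 'a::idom \<Rightarrow> 'a fract"
  by unfold_locales simp_all

interpretation fract_poly: map_poly_inj_idom_hom "to_fract :: 'a::idom \<Rightarrow> 'a fract" ..

interpretation lift2: inj_idom_hom "lift2 :: 'k::field poly poly \<Rightarrow> _"
  by unfold_locales (simp_all add: lift2_eq_fract_poly hom_distribs)

interpretation ev2: comm_ring_hom "\<lambda>w. ev2 w a b" for a b :: "'k::field"
proof -
  interpret eval_a: comm_ring_hom "\<lambda>c. poly (c :: 'k poly) a" by unfold_locales auto
  interpret map_eval_a: map_poly_comm_ring_hom "\<lambda>c. poly (c :: 'k poly) a" ..
  show "comm_ring_hom (\<lambda>w. ev2 w a b)"
    unfolding ev2_def by unfold_locales (auto simp: hom_distribs)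
qed

lemma ev2_const [simp]: "ev2 [:c:] a b = poly c a"
  by (cases "c = 0") (auto simp: ev2_def map_poly_pCons)

lemma ev2_smult [simp]: "ev2 (Polynomial.smult c w) a b = poly c a * ev2 w a b"
  by (metis ev2.hom_mult ev2_const mult.left_neutral smult_one mult_smult_left)

lemma ev2_var [simp]: "ev2 [:0, 1:] a b = b"
  by (simp add: ev2_def)

section \<open>Division by a monic polynomial\<close>

definition lead_reduce :: "'a::comm_ring_1 poly \<Rightarrow> 'a poly \<Rightarrow> 'a poly" where
  "lead_reduce f H = H - monom (lead_coeff H) (degree H - degree f) * f"

lemma degree_lead_reduce_less:
  fixes f H :: "'a::comm_ring_1 poly"
  assumes monic: "lead_coeff f = 1" and "1 \<le> degree f" and le: "degree f \<le> degree H"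
  shows "degree (lead_reduce f H) < degree H"
proof -
  define M where "M = monom (lead_coeff H) (degree H - degree f) * f"
  have "degree M \<le> degree H"
    using le degree_mult_le[of "monom (lead_coeff H) (degree H - degree f)" f]
      degree_monom_le[of "lead_coeff H" "degree H - degree f"] by (simp add: M_def)
  moreover have "coeff M (degree H) = lead_coeff H"
    using le monic by (simp add: M_def coeff_monom_mult)
  moreover have "0 < degree H" using assms by simp
  ultimately show ?thesis
    unfolding lead_reduce_def M_def[symmetric]
    by (metis degree_diff_le diff_self eq_zero_or_degree_less coeff_diff le_less degree_0)
qed

lemma monic_division_invariant:
  fixes f :: "'a::comm_ring_1 poly"
  assumes monic: "lead_coeff f = 1" "1 \<le> degree f"
    and invariant: "\<And>H. P H \<Longrightarrow> degree f \<le> degree H \<Longrightarrow> P (lead_reduce f H)"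
    and "P H"
  shows "\<exists>Q R. H = Q * f + R \<and> degree R < degree f \<and> P R"
  using \<open>P H\<close>
proof (induction "degree H" arbitrary: H rule: less_induct)
  case less
  show ?case
  proof (cases "degree H < degree f")
    case True
    then show ?thesis using less.prems by (intro exI[of _ 0] exI[of _ H]) simp
  next
    case False
    then have "degree (lead_reduce f H) < degree H" "P (lead_reduce f H)"
      using degree_lead_reduce_less[OF monic] invariant[OF less.prems] by simp_all
    then obtain Q R where QR: "lead_reduce f H = Q * f + R" "degree R < degree f" "P R"
      using less.hyps by blast
    then have "H = (Q + monom (lead_coeff H) (degree H - degree f)) * f + R"
      by (simp add: lead_reduce_def algebra_simps)
    then show ?thesis using QR by blast
  qed
qed

lemma (in inj_idom_hom) monic_dvd_if_map_poly_dvd: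
  assumes monic: "lead_coeff p = 1" and dvd: "map_poly hom p dvd map_poly hom q"
  shows "p dvd q"
proof (cases "degree p = 0")
  case True
  then have "p = 1" using monic by (metis leading_coeff_0_iff degree_0_id one_pCons)
  then show ?thesis by simp
next
  case False
  interpret map_poly_hom: map_poly_inj_idom_hom hom ..
  obtain Q R where QR: "q = Q * p + R" "degree R < degree p"
    using monic_division_invariant[OF monic, of "\<lambda>_. True" q] False by auto
  have "map_poly hom p dvd map_poly hom R"
    using dvd QR(1) by (simp add: hom_distribs dvd_add_right_iff)
  then have "R = 0"
    using QR(2) dvd_imp_degree_le[of "map_poly hom p" "map_poly hom R"] by fastforce
  then show ?thesis using QR(1) by simp
qed

section \<open>Integrality by the determinant trick\<close>

definition poly_over :: "'a::comm_ring_1 set \<Rightarrow> 'a poly set" where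
  "poly_over R = {p. \<forall>i. coeff p i \<in> R}"

definition integral_mod :: "'a::comm_ring_1 set \<Rightarrow> 'a poly \<Rightarrow> 'a poly \<Rightarrow> bool" where
  "integral_mod R f h \<longleftrightarrow>
     (\<exists>p. lead_coeff p = 1 \<and> p \<in> poly_over R \<and> f dvd poly (map_poly (\<lambda>c. [:c:]) p) h)"

text \<open>Multiply \<open>H v\<close> by the adjugate of \<open>H\<close> and read off the entry where \<open>v\<close> is 1.\<close>
lemma dvd_det_if_dvd_mult_mat_vec:
  fixes H :: "'a::comm_ring_1 mat"
  assumes H: "H \<in> carrier_mat N N" and v: "v \<in> carrier_vec N" and "0 < N" and "v $ 0 = 1"
    and dvd: "\<And>i. i < N \<Longrightarrow> f dvd (H *\<^sub>v v) $ i"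
  shows "f dvd det H"
proof -
  define D where "D = adj_mat H"
  have D: "D \<in> carrier_mat N N" using adj_mat[OF H] by (simp add: D_def)
  have "det H = ((det H \<cdot>\<^sub>m 1\<^sub>m N) *\<^sub>v v) $ 0"
    using \<open>0 < N\<close> \<open>v $ 0 = 1\<close> v by simp
  also have "\<dots> = (D *\<^sub>v (H *\<^sub>v v)) $ 0"
    using adj_mat[OF H] D H v by (simp add: D_def assoc_mult_mat_vec[symmetric])
  also have "\<dots> = (\<Sum>k<N. D $$ (0, k) * (H *\<^sub>v v) $ k)"
    using \<open>0 < N\<close> D H v by (auto simp: scalar_prod_def lessThan_atLeast0 intro!: sum.cong)
  finally show ?thesis using dvd by (auto intro!: dvd_sum dvd_mult)
qed

locale subring_set =
  fixes R :: "'a::comm_ring_1 set"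
  assumes zero_mem: "0 \<in> R" and one_mem: "1 \<in> R"
    and add_mem: "\<And>x y. x \<in> R \<Longrightarrow> y \<in> R \<Longrightarrow> x + y \<in> R"
    and mult_mem: "\<And>x y. x \<in> R \<Longrightarrow> y \<in> R \<Longrightarrow> x * y \<in> R"
    and uminus_mem: "\<And>x. x \<in> R \<Longrightarrow> - x \<in> R"
begin

lemma sum_mem: "(\<And>x. x \<in> S \<Longrightarrow> g x \<in> R) \<Longrightarrow> sum g S \<in> R"
  by (induction S rule: infinite_finite_induct) (auto intro: zero_mem add_mem)

lemma prod_mem: "(\<And>x. x \<in> S \<Longrightarrow> g x \<in> R) \<Longrightarrow> prod g S \<in> R"
  by (induction S rule: infinite_finite_induct) (auto intro: one_mem mult_mem)

lemma subring_poly_over: "subring_set (poly_over R)"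
proof
  show "p * p' \<in> poly_over R" if "p \<in> poly_over R" "p' \<in> poly_over R" for p p'
    using that unfolding poly_over_def by (auto simp: coeff_mult intro!: sum_mem mult_mem)
qed (auto simp: poly_over_def coeff_1 zero_mem one_mem add_mem uminus_mem)

lemma const_poly_over: "c \<in> R \<Longrightarrow> [:c:] \<in> poly_over R"
  by (simp add: poly_over_def coeff_pCons zero_mem split: nat.splits)

lemma monom_poly_over: "c \<in> R \<Longrightarrow> monom c n \<in> poly_over R"
  by (simp add: poly_over_def coeff_monom zero_mem)

lemma lead_reduce_poly_over:
  assumes "f \<in> poly_over R" and "H \<in> poly_over R"
  shows "lead_reduce f H \<in> poly_over R"
proof -
  interpret R_poly: subring_set "poly_over R" by (rule subring_poly_over)
  have "lead_coeff H \<in> R" using assms(2) by (simp add: poly_over_def)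
  then show ?thesis
    using assms unfolding lead_reduce_def diff_conv_add_uminus
    by (intro R_poly.add_mem R_poly.uminus_mem R_poly.mult_mem monom_poly_over)
qed

lemma char_poly_poly_over:
  assumes A: "A \<in> carrier_mat N N" and entries: "\<And>i j. i < N \<Longrightarrow> j < N \<Longrightarrow> A $$ (i, j) \<in> R"
  shows "char_poly A \<in> poly_over R"
proof -
  interpret R_poly: subring_set "poly_over R" by (rule subring_poly_over)
  define C where "C = char_poly_matrix A"
  have C: "C \<in> carrier_mat N N" using A by (simp add: C_def)
  have "C $$ (i, j) = (if i = j then [:0, 1:] else 0) + [:- A $$ (i, j):]" if "i < N" "j < N" for i j
    using that A by (simp add: C_def char_poly_matrix_def)
  then have "C $$ (i, j) \<in> poly_over R" if "i < N" "j < N" for i j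
    using that entries uminus_mem by (auto intro!: R_poly.add_mem const_poly_over R_poly.zero_mem)
      (simp add: poly_over_def coeff_pCons zero_mem one_mem split: nat.splits)
  then show ?thesis
    unfolding char_poly_def C_def[symmetric] det_def using C
    by (auto intro!: R_poly.sum_mem R_poly.mult_mem R_poly.prod_mem R_poly.one_mem
        R_poly.uminus_mem simp: sign_def permutes_in_image)
qed

text \<open>The characteristic polynomial of \<open>M\<close> evaluated at \<open>h\<close> is \<open>det (h I - M)\<close>, and
  \<open>(h I - M) e\<close> vanishes modulo \<open>f\<close>.\<close>
lemma integral_mod_determinant_trick:
  fixes h f :: "'a poly" and M :: "nat \<Rightarrow> nat \<Rightarrow> 'a" and e :: "nat \<Rightarrow> 'a poly"
  assumes "0 < N" and e0: "e 0 = 1" and M: "\<And>i j. i < N \<Longrightarrow> j < N \<Longrightarrow> M i j \<in> R"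
    and rel: "\<And>i. i < N \<Longrightarrow> f dvd h * e i - (\<Sum>j<N. Polynomial.smult (M i j) (e j))"
  shows "integral_mod R f h"
proof -
  define A where "A = mat N N (\<lambda>(i, j). M i j)"
  have A: "A \<in> carrier_mat N N" by (simp add: A_def)
  define \<phi> where "\<phi> = (\<lambda>r. pcompose r h)"
  interpret \<phi>: comm_ring_hom \<phi> unfolding \<phi>_def by (rule pcompose_hom.comm_ring_hom_axioms)
  define H where "H = map_mat \<phi> (char_poly_matrix A)"
  have H: "H \<in> carrier_mat N N" using A by (simp add: H_def)
  have H_entry: "H $$ (i, j) = (if i = j then h else 0) - [:M i j:]" if "i < N" "j < N" for i j
    using that by (simp add: H_def A_def char_poly_matrix_def \<phi>_def hom_distribs pcompose_pCons)
  have He: "f dvd (H *\<^sub>v vec N e) $ i" if i: "i < N" for i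
  proof -
    have "(H *\<^sub>v vec N e) $ i = (\<Sum>j<N. (if i = j then h * e j else 0) - Polynomial.smult (M i j) (e j))"
      using H i by (auto simp: scalar_prod_def lessThan_atLeast0 H_entry algebra_simps
          intro!: sum.cong)
    also have "\<dots> = h * e i - (\<Sum>j<N. Polynomial.smult (M i j) (e j))"
      using i by (simp add: sum_subtractf)
    finally show ?thesis using rel[OF i] by simp
  qed
  have "vec N e $ 0 = 1" using \<open>0 < N\<close> e0 by simp
  then have "f dvd det H" using He by (rule dvd_det_if_dvd_mult_mat_vec[OF H vec_carrier \<open>0 < N\<close>])
  moreover have "det H = \<phi> (char_poly A)"
    unfolding H_def char_poly_def by (rule \<phi>.hom_det)
  then have "det H = poly (map_poly (\<lambda>c. [:c:]) (char_poly A)) h"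
    by (simp add: \<phi>_def pcompose_altdef)
  moreover have "char_poly A \<in> poly_over R"
    using M by (intro char_poly_poly_over[OF A]) (simp add: A_def)
  ultimately show ?thesis
    unfolding integral_mod_def using degree_monic_char_poly[OF A] by metis
qed

lemma integral_mod_by_reduction:
  fixes f h :: "'a poly" and e :: "nat \<Rightarrow> 'a poly"
  assumes monic: "lead_coeff f = 1" "1 \<le> degree f"
    and invariant: "\<And>H. P H \<Longrightarrow> degree f \<le> degree H \<Longrightarrow> P (lead_reduce f H)"
    and e0: "e 0 = 1"
    and products: "\<And>k. P (h * e k)"
    and expand: "\<And>r. P r \<Longrightarrow> degree r < degree f \<Longrightarrow>
        \<exists>M. (\<forall>j. M j \<in> R) \<and> r = (\<Sum>j<degree f. Polynomial.smult (M j) (e j))"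
  shows "integral_mod R f h"
proof -
  have "\<exists>M. (\<forall>j. M j \<in> R) \<and> f dvd h * e k - (\<Sum>j<degree f. Polynomial.smult (M j) (e j))" for k
  proof -
    obtain Q r where Qr: "h * e k = Q * f + r" "degree r < degree f" "P r"
      using monic_division_invariant[OF monic invariant products] by blast
    then obtain M where "\<forall>j. M j \<in> R" "r = (\<Sum>j<degree f. Polynomial.smult (M j) (e j))"
      using expand by blast
    moreover have "h * e k - r = f * Q" using Qr(1) by simp
    ultimately show ?thesis by (metis dvd_triv_left)
  qed
  then obtain M where "\<And>k. (\<forall>j. M k j \<in> R) \<and>
      f dvd h * e k - (\<Sum>j<degree f. Polynomial.smult (M k j) (e j))"
    by metis
  then show ?thesis
    using monic by (intro integral_mod_determinant_trick[of "degree f" e M]) (simp_all add: e0)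
qed

end

section \<open>Pole orders at the places over infinity\<close>

definition rdegree :: "'k::field poly fract \<Rightarrow> int" where
  "rdegree c = (THE d. \<exists>u w. u \<noteq> 0 \<and> w \<noteq> 0 \<and> c = Fract u w \<and> d = int (degree u) - int (degree w))"

lemma rdegree_Fract:
  fixes u w :: "'k::field poly"
  assumes "u \<noteq> 0" "w \<noteq> 0"
  shows "rdegree (Fract u w) = int (degree u) - int (degree w)"
  unfolding rdegree_def
proof (rule the_equality)
  fix d assume "\<exists>u' w'. u' \<noteq> 0 \<and> w' \<noteq> 0 \<and> Fract u w = Fract u' w' \<and>
      d = int (degree u') - int (degree w')"
  then obtain u' w' where u'w': "u' \<noteq> 0" "w' \<noteq> 0" "Fract u w = Fract u' w'"
      "d = int (degree u') - int (degree w')" by blast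
  then have "degree (u * w') = degree (u' * w)" using assms by (simp add: eq_fract)
  then show "d = int (degree u) - int (degree w)" using u'w' assms by (simp add: degree_mult_eq)
qed (use assms in blast)

lemma rdegree_mult: "c \<noteq> 0 \<Longrightarrow> d \<noteq> 0 \<Longrightarrow> rdegree (c * d) = rdegree c + rdegree d"
  by (cases c rule: Fract_cases_nonzero; cases d rule: Fract_cases_nonzero)
    (auto simp: rdegree_Fract degree_mult_eq)

lemma rdegree_add:
  assumes "c \<noteq> 0" "d \<noteq> 0" "c + d \<noteq> 0"
  shows "rdegree (c + d) \<le> max (rdegree c) (rdegree d)"
proof -
  obtain u w u' w' :: "'a::field poly" where c: "c = Fract u w" "u \<noteq> 0" "w \<noteq> 0"
    and d: "d = Fract u' w'" "u' \<noteq> 0" "w' \<noteq> 0"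
    using assms(1,2) by (metis Fract_cases_nonzero)
  have sum: "c + d = Fract (u * w' + u' * w) (w * w')" using c d by simp
  then have "u * w' + u' * w \<noteq> 0" using assms(3) c d by (auto simp: Zero_fract_def eq_fract)
  moreover have "degree (u * w' + u' * w) \<le> max (degree (u * w')) (degree (u' * w))"
    by (rule degree_add_le_max)
  ultimately show ?thesis using sum c d by (simp add: rdegree_Fract degree_mult_eq)
qed

lemma rdegree_uminus: "rdegree (- c) = rdegree c"
  by (cases c rule: Fract_cases_nonzero) (auto simp: rdegree_Fract)

lemma rdegree_inverse: "c \<noteq> 0 \<Longrightarrow> rdegree (inverse c) = - rdegree c"
  by (cases c rule: Fract_cases_nonzero) (auto simp: rdegree_Fract)

lemma rdegree_to_fract: "u \<noteq> 0 \<Longrightarrow> rdegree (to_fract u) = int (degree u)"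
  by (simp add: to_fract_def rdegree_Fract)

text \<open>\<open>pole_le K c\<close> says that \<open>c \<in> K(x)\<close> has a pole of order at most \<open>K\<close> at each place of
  the curve over \<open>x = \<infinity>\<close>; these places have ramification index 3.\<close>
definition pole_le :: "int \<Rightarrow> 'k::field poly fract \<Rightarrow> bool" where
  "pole_le K c \<longleftrightarrow> c = 0 \<or> 3 * rdegree c \<le> K"

lemma pole_le_0 [simp]: "pole_le K 0"
  by (simp add: pole_le_def)

lemma pole_le_mono: "pole_le K c \<Longrightarrow> K \<le> K' \<Longrightarrow> pole_le K' c"
  by (auto simp: pole_le_def)

lemma pole_le_add: "pole_le K c \<Longrightarrow> pole_le K d \<Longrightarrow> pole_le K (c + d)"
  using rdegree_add[of c d] unfolding pole_le_def by fastforce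

lemma pole_le_uminus: "pole_le K c \<Longrightarrow> pole_le K (- c)"
  by (simp add: pole_le_def rdegree_uminus)

lemma pole_le_diff: "pole_le K c \<Longrightarrow> pole_le K d \<Longrightarrow> pole_le K (c - d)"
  using pole_le_add[of K c "- d"] pole_le_uminus[of K d] by simp

lemma pole_le_mult: "pole_le K c \<Longrightarrow> pole_le L d \<Longrightarrow> pole_le (K + L) (c * d)"
  by (cases "c = 0"; cases "d = 0") (auto simp: pole_le_def rdegree_mult)

lemma pole_le_sum: "(\<And>i. i \<in> S \<Longrightarrow> pole_le K (g i)) \<Longrightarrow> pole_le K (sum g S)"
  by (induction S rule: infinite_finite_induct) (auto intro: pole_le_add)

lemma pole_le_to_fract: "degree u \<le> d \<Longrightarrow> pole_le (3 * int d) (to_fract u)"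
  by (cases "u = 0") (auto simp: pole_le_def rdegree_to_fract)

lemma pole_le_1: "pole_le 0 1"
  using pole_le_to_fract[of 1 0] by simp

lemma pole_le_xfun_power: "pole_le (3 * int j) (xfun ^ j)"
  using pole_le_to_fract[of "[:0, 1:] ^ j" j] by (simp add: xfun_eq degree_linear_power to_fract.hom_power)

lemma pole_le_inverse_xfun_power: "pole_le (- 3 * int j) (inverse (xfun ^ j))"
  by (simp add: pole_le_def xfun_eq rdegree_inverse rdegree_to_fract degree_power_eq
      flip: to_fract.hom_power)

text \<open>Pole orders are multiples of 3.\<close>
lemma pole_le_round: "pole_le K c \<Longrightarrow> K < 3 \<Longrightarrow> pole_le 0 c"
  by (auto simp: pole_le_def)

lemma O_inf_iff_pole_le:
  fixes c :: "'k::field poly fract"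
  shows "c \<in> O_inf \<longleftrightarrow> pole_le 0 c"
proof
  assume "c \<in> O_inf"
  then obtain u w where "w \<noteq> 0" "degree u \<le> degree w" "c = Fract u w"
    by (auto simp: O_inf_def)
  then show "pole_le 0 c" by (cases "u = 0") (auto simp: pole_le_def rdegree_Fract fract_collapse)
next
  assume c: "pole_le 0 c"
  show "c \<in> O_inf"
  proof (cases "c = 0")
    case True
    then show ?thesis unfolding O_inf_def
      by (intro CollectI exI[of _ "0 :: 'k poly"] exI[of _ 1]) (simp add: Zero_fract_def)
  next
    case False
    then obtain u w where uw: "c = Fract u w" "u \<noteq> 0" "w \<noteq> 0" by (metis Fract_cases_nonzero)
    then have "degree u \<le> degree w" using c False by (simp add: pole_le_def rdegree_Fract)
    then show ?thesis using uw unfolding O_inf_def by blast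
  qed
qed

lemma subring_O_inf: "subring_set (O_inf :: 'k::field poly fract set)"
  by unfold_locales
    (auto simp: O_inf_iff_pole_le pole_le_1 pole_le_add pole_le_uminus dest: pole_le_mult[of 0 _ 0])

lemma subring_range_to_fract: "subring_set (range (to_fract :: 'a::idom \<Rightarrow> 'a fract))"
  by unfold_locales (auto simp flip: to_fract.hom_add to_fract.hom_mult to_fract.hom_uminus)

text \<open>For a polynomial in \<open>y\<close> over \<open>K(x)\<close> the function \<open>y\<close> has pole order 2.\<close>
definition poly_pole_le :: "int \<Rightarrow> 'k::field poly fract poly \<Rightarrow> bool" where
  "poly_pole_le N v \<longleftrightarrow> (\<forall>l. pole_le (N - 2 * int l) (coeff v l))"

lemma poly_pole_le_0 [simp]: "poly_pole_le N 0"
  by (simp add: poly_pole_le_def)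

lemma poly_pole_le_mono: "poly_pole_le N v \<Longrightarrow> N \<le> N' \<Longrightarrow> poly_pole_le N' v"
  unfolding poly_pole_le_def by (auto intro: pole_le_mono)

lemma poly_pole_le_add: "poly_pole_le N v \<Longrightarrow> poly_pole_le N w \<Longrightarrow> poly_pole_le N (v + w)"
  unfolding poly_pole_le_def by (auto intro: pole_le_add)

lemma poly_pole_le_uminus: "poly_pole_le N v \<Longrightarrow> poly_pole_le N (- v)"
  unfolding poly_pole_le_def by (auto intro: pole_le_uminus)

lemma poly_pole_le_diff: "poly_pole_le N v \<Longrightarrow> poly_pole_le N w \<Longrightarrow> poly_pole_le N (v - w)"
  unfolding poly_pole_le_def by (auto intro: pole_le_diff)

lemma poly_pole_le_mult:
  assumes v: "poly_pole_le N v" and w: "poly_pole_le L w"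
  shows "poly_pole_le (N + L) (v * w)"
  unfolding poly_pole_le_def coeff_mult
proof (intro allI pole_le_sum)
  fix l i :: nat assume "i \<in> {..l}"
  then have "N + L - 2 * int l = (N - 2 * int i) + (L - 2 * int (l - i))" by auto
  then show "pole_le (N + L - 2 * int l) (coeff v i * coeff w (l - i))"
    using v w unfolding poly_pole_le_def by (metis pole_le_mult)
qed

lemma poly_pole_le_smult: "pole_le K c \<Longrightarrow> poly_pole_le N v \<Longrightarrow> poly_pole_le (K + N) (Polynomial.smult c v)"
  unfolding poly_pole_le_def using pole_le_mult by (fastforce simp: add_diff_eq)

lemma poly_pole_le_monom: "pole_le (N - 2 * int n) c \<Longrightarrow> poly_pole_le N (monom c n)"
  by (simp add: poly_pole_le_def coeff_monom)

lemma poly_pole_le_const: "pole_le N c \<Longrightarrow> poly_pole_le N [:c:]"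
  using poly_pole_le_monom[of N 0 c] by (simp add: monom_0)

lemma poly_pole_le_1: "poly_pole_le 0 1"
  using poly_pole_le_const[OF pole_le_1] by (simp add: one_pCons)

lemma poly_pole_le_lift2_monom:
  "degree c \<le> d \<Longrightarrow> poly_pole_le (3 * int d + 2 * int n) (lift2 (monom c n))"
  by (simp add: lift2_eq_fract_poly map_poly_monom poly_pole_le_monom pole_le_to_fract)

lemma poly_pole_le_lift2_const: "degree c \<le> d \<Longrightarrow> poly_pole_le (3 * int d) (lift2 [:c:])"
  using poly_pole_le_lift2_monom[of c d 0] by (simp add: monom_0)

section \<open>The curve\<close>

definition curve_bipoly :: "nat \<Rightarrow> 'k::field poly poly" where
  "curve_bipoly q = [:0, 1:] ^ (q + 1) + [:[:0, 1:] ^ (2 * mm q) + [:0, 1:] ^ mm q:]"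

lemma lift2_curve_bipoly: "lift2 (curve_bipoly q) = curve_poly q"
  by (simp add: curve_bipoly_def curve_poly_def lift2_eq_fract_poly xfun_eq hom_distribs
      monom_altdef)

lemma degree_curve_bipoly: "degree (curve_bipoly q) = q + 1"
  unfolding curve_bipoly_def
  by (subst degree_add_eq_left) (simp_all add: degree_linear_power[of 0, simplified])

lemma lead_coeff_curve_bipoly: "lead_coeff (curve_bipoly q) = 1"
proof -
  have "lead_coeff (curve_bipoly q) = coeff (curve_bipoly q) (q + 1)"
    by (simp only: degree_curve_bipoly)
  then show ?thesis by (simp add: curve_bipoly_def coeff_linear_power[of 0, simplified])
qed

lemma fract_poly_curve_bipoly: "map_poly to_fract (curve_bipoly q) = curve_poly q"
  using lift2_curve_bipoly by (simp add: lift2_eq_fract_poly)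

lemma degree_curve_poly: "degree (curve_poly q :: 'k::field poly fract poly) = q + 1"
  by (simp flip: fract_poly_curve_bipoly add: degree_curve_bipoly)

lemma lead_coeff_curve_poly: "lead_coeff (curve_poly q :: 'k::field poly fract poly) = 1"
  by (metis fract_poly_curve_bipoly lead_coeff_curve_bipoly to_fract.hom_lead_coeff to_fract_1)

lemma ev2_curve_bipoly: "ev2 (curve_bipoly q) a b = b ^ (q + 1) + a ^ (2 * mm q) + a ^ mm q"
  unfolding curve_bipoly_def ev2.hom_add ev2.hom_power by (simp add: add.assoc)

lemma ev2_eq_0_if_curve_poly_dvd:
  assumes on_curve: "b ^ (q + 1) + a ^ (2 * mm q) + a ^ mm q = 0"
    and dvd: "curve_poly q dvd lift2 H"
  shows "ev2 H a b = 0"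
proof -
  have "map_poly to_fract (curve_bipoly q) dvd map_poly to_fract H"
    using dvd unfolding fract_poly_curve_bipoly lift2_eq_fract_poly .
  then have "curve_bipoly q dvd H"
    by (rule to_fract.monic_dvd_if_map_poly_dvd[OF lead_coeff_curve_bipoly])
  then obtain r where "H = curve_bipoly q * r" by (elim dvdE)
  then show ?thesis using on_curve by (simp add: ev2.hom_mult ev2_curve_bipoly)
qed

lemma local_ring_iff_dvd:
  "local_ring q a b g \<longleftrightarrow> (\<exists>u w. ev2 w a b \<noteq> 0 \<and> curve_poly q dvd lift2 w * g - lift2 u)"
  by (simp add: local_ring_def mod_eq_0_iff_dvd)

lemma smult_diff_mult_smult_inverse:
  fixes p q r :: "'a::field poly"
  assumes "c \<noteq> 0"
  shows "Polynomial.smult c (p * Polynomial.smult (inverse c) q - r) = p * q - Polynomial.smult c r"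
  using assms by (simp add: smult_diff_right)

lemma local_ring_smult_inverseI:
  assumes "c \<noteq> 0" and W: "ev2 W a b \<noteq> 0"
    and rel: "curve_poly q dvd lift2 W * g - Polynomial.smult c (lift2 U)"
  shows "local_ring q a b (Polynomial.smult (inverse c) g)"
proof -
  have "curve_poly q dvd Polynomial.smult c (lift2 W * Polynomial.smult (inverse c) g - lift2 U)"
    using rel by (simp only: smult_diff_mult_smult_inverse[OF \<open>c \<noteq> 0\<close>])
  then show ?thesis
    unfolding local_ring_iff_dvd using W \<open>c \<noteq> 0\<close> by (auto simp: dvd_smult_iff)
qed

text \<open>Here \<open>g = (x - a)^n U / W\<close> with units \<open>U\<close> and \<open>W\<close> of the local ring; the point is that
  \<open>x - a\<close> itself is not a unit there.\<close>
lemma not_local_ring_smult_inverse_power: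
  fixes a b :: "'k::field" and W U :: "'k poly poly"
  defines "t \<equiv> to_fract [:- a, 1:]"
  assumes on_curve: "b ^ (q + 1) + a ^ (2 * mm q) + a ^ mm q = 0"
    and U: "ev2 U a b \<noteq> 0"
    and rel: "curve_poly q dvd lift2 W * g - Polynomial.smult (t ^ n) (lift2 U)"
  shows "\<not> local_ring q a b (Polynomial.smult (inverse (t ^ Suc n)) g)"
proof
  have t: "t \<noteq> 0" by (simp add: t_def)
  assume "local_ring q a b (Polynomial.smult (inverse (t ^ Suc n)) g)"
  then obtain u w where w: "ev2 w a b \<noteq> 0"
    and "curve_poly q dvd lift2 w * Polynomial.smult (inverse (t ^ Suc n)) g - lift2 u"
    unfolding local_ring_iff_dvd by blast
  then have rel_w: "curve_poly q dvd lift2 w * g - Polynomial.smult (t ^ Suc n) (lift2 u)"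
    using t by (metis dvd_smult smult_diff_mult_smult_inverse power_not_zero)
  have "lift2 w * (lift2 W * g - Polynomial.smult (t ^ n) (lift2 U))
      - lift2 W * (lift2 w * g - Polynomial.smult (t ^ Suc n) (lift2 u))
      = Polynomial.smult (t ^ n) (lift2 ([:[:- a, 1:]:] * W * u - w * U))"
    by (simp add: lift2_eq_fract_poly t_def hom_distribs smult_diff_right algebra_simps)
  then have "curve_poly q dvd Polynomial.smult (t ^ n) (lift2 ([:[:- a, 1:]:] * W * u - w * U))"
    using rel rel_w by (metis dvd_diff dvd_mult)
  then have "ev2 ([:[:- a, 1:]:] * W * u - w * U) a b = 0"
    using t by (intro ev2_eq_0_if_curve_poly_dvd[OF on_curve]) (simp add: dvd_smult_iff)
  then show False using w U by (simp add: hom_distribs)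
qed

lemma val_at_lift2I:
  fixes G W U :: "'k::field poly poly"
  assumes on_curve: "b ^ (q + 1) + a ^ (2 * mm q) + a ^ mm q = 0"
    and W: "ev2 W a b \<noteq> 0" and U: "ev2 U a b \<noteq> 0"
    and rel: "curve_bipoly q dvd W * G - [:[:- a, 1:] ^ n:] * U"
  shows "val_at q a b (lift2 G) n"
proof -
  define t where "t = to_fract [:- a, 1:]"
  have rel': "curve_poly q dvd lift2 W * lift2 G - Polynomial.smult (t ^ n) (lift2 U)"
    using fract_poly.hom_dvd[OF rel]
    by (simp add: lift2_eq_fract_poly fract_poly_curve_bipoly hom_distribs t_def)
  have "t ^ n \<noteq> 0" by (simp add: t_def)
  from this W rel' have "local_ring q a b (Polynomial.smult (inverse (t ^ n)) (lift2 G))"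
    by (rule local_ring_smult_inverseI)
  moreover have "\<not> local_ring q a b (Polynomial.smult (inverse (t ^ Suc n)) (lift2 G))"
    using not_local_ring_smult_inverse_power[OF on_curve U] rel' by (simp add: t_def)
  ultimately show ?thesis
    unfolding val_at_def emb_eq_to_fract t_def Suc_eq_plus1 by blast
qed

lemma poly_pole_le_curve_poly: "poly_pole_le (2 * int (q + 1)) (curve_poly q)"
proof -
  have "pole_le (3 * int (2 * mm q)) (xfun ^ (2 * mm q) + xfun ^ mm q)"
    by (intro pole_le_add pole_le_xfun_power pole_le_mono[OF pole_le_xfun_power]) simp
  moreover have "3 * int (2 * mm q) \<le> 2 * int (q + 1)" by (simp add: mm_def)
  ultimately show ?thesis
    unfolding curve_poly_def
    by (intro poly_pole_le_add poly_pole_le_monom poly_pole_le_const)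
      (auto intro: pole_le_mono pole_le_1)
qed

lemma poly_pole_le_lead_reduce_curve_poly:
  assumes H: "poly_pole_le 0 H" and deg: "degree (curve_poly q) \<le> degree H"
  shows "poly_pole_le 0 (lead_reduce (curve_poly q) H)"
proof -
  have "pole_le (- 2 * int (q + 1) - 2 * int (degree H - (q + 1))) (lead_coeff H)"
    using H deg by (simp add: poly_pole_le_def degree_curve_poly)
  then have "poly_pole_le (- 2 * int (q + 1) + 2 * int (q + 1))
      (monom (lead_coeff H) (degree H - (q + 1)) * curve_poly q)"
    by (intro poly_pole_le_mult poly_pole_le_monom poly_pole_le_curve_poly)
  then show ?thesis
    unfolding lead_reduce_def degree_curve_poly using H by (simp add: poly_pole_le_diff)
qed

lemma sum_monom_coeff_lessThan: "degree r < N \<Longrightarrow> (\<Sum>j<N. monom (coeff r j) j) = r"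
  by (metis poly_as_sum_of_monoms' lessThan_Suc_atMost Suc_pred' less_Suc_eq_le gr_implies_not0
      neq0_conv)

lemma lift2_poly_over: "lift2 G \<in> poly_over (range to_fract)"
  by (simp add: poly_over_def lift2_eq_fract_poly)

lemma integral_Kx_lift2: "integral_Kx q (lift2 (G :: 'k::field poly poly))"
proof -
  let ?R = "range (to_fract :: 'k poly \<Rightarrow> _)"
  let ?f = "curve_poly q :: 'k poly fract poly"
  interpret R: subring_set ?R by (rule subring_range_to_fract)
  have "integral_mod ?R (curve_poly q) (lift2 G)"
  proof (rule R.integral_mod_by_reduction[where P = "\<lambda>v. v \<in> poly_over ?R" and e = "monom 1"])
    show "lead_coeff ?f = 1" by (rule lead_coeff_curve_poly)
    show "1 \<le> degree ?f" by (simp add: degree_curve_poly)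
    show "lead_reduce ?f H \<in> poly_over ?R" if "H \<in> poly_over ?R" for H
      using that lift2_poly_over[of "curve_bipoly q"]
      by (intro R.lead_reduce_poly_over) (simp_all add: lift2_curve_bipoly)
    show "lift2 G * monom 1 k \<in> poly_over ?R" for k
      using lift2_poly_over[of "G * monom 1 k"] by (simp add: lift2_eq_fract_poly)
    show "\<exists>M. (\<forall>j. M j \<in> ?R) \<and> r = (\<Sum>j<degree ?f. Polynomial.smult (M j) (monom 1 j))"
      if "r \<in> poly_over ?R" "degree r < degree ?f" for r
    proof (intro exI[of _ "coeff r"] conjI)
      show "\<forall>j. coeff r j \<in> ?R" using that(1) by (simp add: poly_over_def)
      have "(\<Sum>j<degree ?f. Polynomial.smult (coeff r j) (monom 1 j)) = r"
        using sum_monom_coeff_lessThan[OF that(2)] by (simp add: smult_monom)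
      then show "r = (\<Sum>j<degree ?f. Polynomial.smult (coeff r j) (monom 1 j))" ..
    qed
  qed (simp add: monom_0 one_pCons)
  then obtain p where p: "lead_coeff p = 1" "p \<in> poly_over ?R"
    "curve_poly q dvd poly (map_poly (\<lambda>c. [:c:]) p) (lift2 G)"
    unfolding integral_mod_def by blast
  define p' where "p' = map_poly (inv_into UNIV to_fract) p"
  have "inj (to_fract :: 'k poly \<Rightarrow> _)" by (simp add: inj_def)
  then have "inv_into UNIV to_fract 0 = (0 :: 'k poly)" by (metis inv_f_f to_fract_0)
  then have p'p: "map_poly to_fract p' = p"
    using p(2) by (intro poly_eqI) (auto simp: p'_def poly_over_def coeff_map_poly f_inv_into_f)
  then have "lead_coeff p' = 1" using p(1) by (metis to_fract.hom_lead_coeff to_fract_eq_iff to_fract_1)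
  moreover have "map_poly (\<lambda>c. [:emb c:]) p' = map_poly (\<lambda>c. [:c:]) p"
    by (subst p'p[symmetric], subst map_poly_map_poly) (auto simp: emb_eq_to_fract o_def)
  ultimately show ?thesis
    unfolding integral_Kx_def using p(3) by (auto simp: mod_eq_0_iff_dvd)
qed

lemma integral_Oinf_if_poly_pole_le:
  fixes h :: "'k::field poly fract poly"
  assumes h: "poly_pole_le 0 h"
  shows "integral_Oinf q h"
proof -
  interpret O: subring_set O_inf by (rule subring_O_inf)
  let ?f = "curve_poly q :: 'k poly fract poly"
  \<comment> \<open>\<open>e k = y^k / x^\<lceil>2k/3\<rceil>\<close>: the largest power of \<open>x\<close> keeping the pole order \<open>\<le> 0\<close>\<close>
  define r :: "nat \<Rightarrow> nat" where "r k = (2 * k + 2) div 3" for k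
  define e :: "nat \<Rightarrow> 'k poly fract poly"
    where "e k = Polynomial.smult (inverse (xfun ^ r k)) (monom 1 k)" for k
  have e: "poly_pole_le 0 (e k)" for k
  proof -
    have "poly_pole_le (- 3 * int (r k) + 2 * int k) (e k)"
      unfolding e_def by (intro poly_pole_le_smult pole_le_inverse_xfun_power poly_pole_le_monom)
        (simp add: pole_le_1)
    then show ?thesis by (rule poly_pole_le_mono) (simp add: r_def)
  qed
  have "integral_mod O_inf (curve_poly q) h"
  proof (rule O.integral_mod_by_reduction[where P = "poly_pole_le 0" and e = e])
    show "lead_coeff ?f = 1" by (rule lead_coeff_curve_poly)
    show "1 \<le> degree ?f" by (simp add: degree_curve_poly)
    show "poly_pole_le 0 (lead_reduce ?f H)" if "poly_pole_le 0 H" "degree ?f \<le> degree H" for H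
      using that by (rule poly_pole_le_lead_reduce_curve_poly)
    show "e 0 = 1" by (simp add: e_def r_def monom_0 one_pCons)
    show "poly_pole_le 0 (h * e k)" for k using poly_pole_le_mult[OF h e] by simp
    show "\<exists>M. (\<forall>j. M j \<in> O_inf) \<and> v = (\<Sum>j<degree ?f. Polynomial.smult (M j) (e j))"
      if v: "poly_pole_le 0 v" "degree v < degree ?f" for v
    proof (intro exI conjI allI)
      show "coeff v j * xfun ^ r j \<in> O_inf" for j
      proof -
        have "pole_le ((0 - 2 * int j) + 3 * int (r j)) (coeff v j * xfun ^ r j)"
          using v(1) by (intro pole_le_mult pole_le_xfun_power) (simp add: poly_pole_le_def)
        then show ?thesis
          unfolding O_inf_iff_pole_le by (rule pole_le_round) (simp add: r_def)
      qed
      have "Polynomial.smult (coeff v j * xfun ^ r j) (e j) = monom (coeff v j) j" for j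
        by (simp add: e_def smult_monom xfun_eq)
      then have "(\<Sum>j<degree ?f. Polynomial.smult (coeff v j * xfun ^ r j) (e j)) = v"
        using sum_monom_coeff_lessThan[OF v(2)] by simp
      then show "v = (\<Sum>j<degree ?f. Polynomial.smult (coeff v j * xfun ^ r j) (e j))" ..
    qed
  qed
  then show ?thesis
    unfolding integral_mod_def integral_Oinf_def poly_over_def by (auto simp: mod_eq_0_iff_dvd)
qed

lemma in_L3_lift2I:
  fixes G :: "'k::field poly poly"
  assumes "poly_pole_le (3 * int j) (lift2 G)"
  shows "in_L3 q j (lift2 G)"
proof -
  have "poly_pole_le 0 (Polynomial.smult (inverse (xfun ^ j)) (lift2 G))"
    using poly_pole_le_smult[OF pole_le_inverse_xfun_power[of j] assms] by simp
  then show ?thesis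
    unfolding in_L3_def using integral_Kx_lift2 integral_Oinf_if_poly_pole_le by blast
qed

section \<open>The functions \<open>g\<^sub>k\<close>\<close>

lemma cube_root_if_alpha:
  fixes w :: "'a::field"
  assumes "w \<noteq> -1" and alpha: "(w / (1 + w)) ^ 2 - w / (1 + w) + 1 = 0"
  shows "w ^ 2 + w + 1 = 0"
proof -
  define r where "r = w / (1 + w)"
  have "1 + w \<noteq> 0" using assms(1) by (metis add.commute add_eq_0_iff)
  then have r: "r * (1 + w) = w" by (simp add: r_def)
  have "(1 + w) ^ 2 * (r ^ 2 - r + 1) = (r * (1 + w)) ^ 2 - r * (1 + w) * (1 + w) + (1 + w) ^ 2"
    by (simp add: algebra_simps power2_eq_square)
  also have "\<dots> = w ^ 2 + w + 1"
    unfolding r by (simp add: algebra_simps power2_eq_square)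
  finally show ?thesis using alpha by (simp add: r_def)
qed

locale cube_root_point =
  fixes q e :: nat and a b :: "'k::field"
  assumes prime_char: "prime CHAR('k)" and q_eq: "q = CHAR('k) ^ e" and q_mod_3: "q mod 3 = 2"
    and a_nonzero: "a \<noteq> 0"
    and on_curve: "b ^ (q + 1) + a ^ (2 * mm q) + a ^ mm q = 0"
    and cube_root: "(a ^ mm q) ^ 2 + a ^ mm q + 1 = 0"
begin

abbreviation m :: nat where "m \<equiv> mm q"
abbreviation \<omega> :: 'k where "\<omega> \<equiv> a ^ m"

lemma three_m: "3 * m = q + 1"
  using q_mod_3 unfolding mm_def by presburger

lemma frobenius:
  fixes x y :: "'r::comm_ring_1"
  assumes "CHAR('r) = CHAR('k)"
  shows "(x - y) ^ q = x ^ q - y ^ q"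
  using assms prime_char q_eq by (intro freshmans_dream_diff[where k = e]) simp_all

lemma of_nat_q: "(of_nat q :: 'k) = 0"
proof -
  have "e \<noteq> 0"
  proof
    assume "e = 0"
    then show False using q_eq q_mod_3 by simp
  qed
  then show ?thesis by (simp add: q_eq of_nat_eq_0_iff_char_dvd)
qed

lemma three_m_eq_1: "3 * (of_nat m :: 'k) = 1"
  using arg_cong[OF three_m, of "of_nat :: nat \<Rightarrow> 'k"] of_nat_q by simp

lemma \<omega>_cube: "\<omega> ^ 3 = 1"
proof -
  have "\<omega> ^ 3 - 1 = (\<omega> - 1) * (\<omega> ^ 2 + \<omega> + 1)"
    by (simp add: algebra_simps power2_eq_square power3_eq_cube)
  then show ?thesis using cube_root by simp
qed

lemma \<omega>_ne_\<omega>2: "\<omega> \<noteq> \<omega> ^ 2"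
proof
  assume "\<omega> = \<omega> ^ 2"
  moreover have "\<omega> \<noteq> 0" using a_nonzero by simp
  ultimately have "\<omega> = 1" by (metis mult_cancel_left1 power2_eq_square)
  then have "(3 :: 'k) = 0" using cube_root by simp
  then show False using three_m_eq_1 by simp
qed

lemma a_power_q: "a ^ q = inverse a"
proof -
  have "a * a ^ q = \<omega> ^ 3" by (metis three_m power_Suc Suc_eq_plus1 power_mult mult.commute)
  then show ?thesis using \<omega>_cube by (simp add: inverse_unique)
qed

lemma b_power_q1: "b ^ (q + 1) = 1"
proof -
  have "b ^ (q + 1) + (\<omega> ^ 2 + \<omega>) = 0"
    using on_curve by (simp add: power_mult mult.commute add.assoc)
  moreover have "\<omega> ^ 2 + \<omega> = -1" using cube_root by (simp add: eq_neg_iff_add_eq_0)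
  ultimately show ?thesis by (simp add: add_eq_0_iff)
qed

lemma b_nonzero: "b \<noteq> 0"
  using b_power_q1 by auto

definition X :: "'k poly" where "X = [:0, 1:]"
definition T :: "'k poly" where "T = [:- a, 1:]"
definition S :: "'k poly" where "S = X ^ m"
definition Y :: "'k poly poly" where "Y = [:0, 1:]"
definition B :: "'k poly poly" where "B = [:[:b:]:]"

lemma T_eq: "T = X - [:a:]"
  by (simp add: T_def X_def)

lemma poly_T [simp]: "poly T a = 0"
  by (simp add: T_def)

lemma poly_S [simp]: "poly S a = \<omega>"
  by (simp add: S_def X_def)

lemma S_cube: "S ^ 3 = X * X ^ q"
proof -
  have "m * 3 = Suc q" using three_m by simp
  then show ?thesis by (simp add: S_def flip: power_mult)
qed

lemma B_power_q1: "B ^ (q + 1) = 1"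
  using b_power_q1 by (simp add: B_def poly_const_pow one_pCons)

lemma ev2_Y [simp]: "ev2 Y a b = b" and ev2_B [simp]: "ev2 B a b = b"
  by (simp_all add: Y_def B_def)

lemma curve_bipoly_eq: "curve_bipoly q = Y ^ (q + 1) + [:S ^ 2 + S:]"
  unfolding curve_bipoly_def Y_def S_def X_def by (simp add: mult.commute flip: power_mult)

lemma S_minus_\<omega>:
  obtains S0 where "S - [:\<omega>:] = T * S0" and "poly S0 a \<noteq> 0"
proof
  define S0 where "S0 = (\<Sum>i<m. [:a:] ^ (m - Suc i) * X ^ i)"
  have "X ^ m - [:a:] ^ m = (X - [:a:]) * S0" unfolding S0_def by (rule power_diff_sumr2)
  then show "S - [:\<omega>:] = T * S0" by (simp add: S_def T_eq poly_const_pow)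
  have "poly S0 a = (\<Sum>i<m. a ^ (m - 1))"
    by (auto simp: S0_def X_def poly_sum poly_const_pow simp flip: power_add intro!: sum.cong)
  also have "\<dots> = of_nat m * a ^ (m - 1)" by simp
  finally show "poly S0 a \<noteq> 0" using three_m_eq_1 a_nonzero by auto
qed

lemma cyclotomic_factor: "s ^ 2 + s + 1 = (s - [:\<omega>:]) * (s - [:\<omega> ^ 2:])"
proof -
  have "\<omega> + \<omega> ^ 2 = -1" using cube_root by (simp add: eq_neg_iff_add_eq_0 algebra_simps)
  then have sum: "[:\<omega>:] + [:\<omega> ^ 2:] = (-1 :: 'k poly)" by (simp add: one_pCons)
  have "\<omega> * \<omega> ^ 2 = 1"
    using \<omega>_cube by (simp add: power2_eq_square power3_eq_cube mult.assoc)
  then have prod: "[:\<omega>:] * [:\<omega> ^ 2:] = (1 :: 'k poly)" by (simp add: one_pCons mult.commute)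
  have "(s - w1) * (s - w2) = s ^ 2 - (w1 + w2) * s + w1 * w2" for w1 w2 :: "'k poly"
    by (simp add: algebra_simps power2_eq_square)
  then show ?thesis using sum prod by simp
qed

lemma X_div_a_minus_S_cube: "Polynomial.smult (inverse a) X - S ^ 3 = - (X * T ^ q)"
proof -
  have "T ^ q = X ^ q - [:inverse a:]"
    unfolding T_eq using frobenius[of X "[:a:]"] by (simp add: poly_const_pow a_power_q)
  moreover have "X * [:inverse a:] = Polynomial.smult (inverse a) X" by simp
  ultimately show ?thesis by (simp add: S_cube right_diff_distrib)
qed

definition y_approx :: "'k poly" where
  "y_approx = - Polynomial.smult b (S ^ 2 + S)"

lemma Y_minus_y_approx: "Y - [:y_approx:] = B * curve_bipoly q - B * Y * (Y - B) ^ q"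
proof -
  have "(Y - B) ^ q = Y ^ q - B ^ q" by (rule frobenius) simp
  moreover have "B * B ^ q = 1" using B_power_q1 by simp
  moreover have "[:y_approx:] = - (B * [:S ^ 2 + S:])" by (simp add: y_approx_def B_def)
  moreover have "y - c = bb * (y * yq + s) - bb * y * (yq - bq)"
    if "bb * bq = 1" "c = - (bb * s)" for y c bb yq s bq :: "'k poly poly"
  proof -
    have "bb * (y * yq + s) - bb * y * (yq - bq) = y * (bb * bq) + bb * s"
      by (simp add: algebra_simps)
    then show ?thesis using that by simp
  qed
  ultimately show ?thesis unfolding curve_bipoly_eq by simp
qed

lemma Y_minus_b_factor:
  obtains G where "(Y - B) * G = curve_bipoly q - [:S ^ 2 + S + 1:]" and "ev2 G a b \<noteq> 0"
proof
  define G where "G = (\<Sum>i<q + 1. B ^ (q + 1 - Suc i) * Y ^ i)"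
  have "Y ^ (q + 1) - B ^ (q + 1) = (Y - B) * G" unfolding G_def by (rule power_diff_sumr2)
  moreover have "[:S ^ 2 + S + 1:] = [:S ^ 2 + S:] + 1" by (simp add: one_pCons)
  ultimately show "(Y - B) * G = curve_bipoly q - [:S ^ 2 + S + 1:]"
    unfolding curve_bipoly_eq B_power_q1 by simp
  have "ev2 G a b = (\<Sum>i<q + 1. b ^ q)"
    unfolding G_def ev2.hom_sum ev2.hom_mult ev2.hom_power
    by (auto simp flip: power_add intro!: sum.cong)
  also have "\<dots> = b ^ q" using of_nat_q by simp
  finally show "ev2 G a b \<noteq> 0" using b_nonzero by simp
qed

text \<open>The approximation \<open>y_approx\<close> of \<open>y\<close> is good to order \<open>q\<close> at \<open>P\<close>: by Frobenius,
  \<open>(y - b)^q\<close> is, up to a unit, \<open>(x^(2m) + x^m + 1)^q\<close>, which is divisible by \<open>(x - a)^q\<close>.\<close>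
lemma y_approx_error:
  obtains G E where "ev2 G a b \<noteq> 0" and "curve_bipoly q dvd G * (Y - [:y_approx:]) - [:T ^ q:] * E"
proof -
  let ?f = "curve_bipoly q :: 'k poly poly"
  obtain G where G: "(Y - B) * G = ?f - [:S ^ 2 + S + 1:]" "ev2 G a b \<noteq> 0"
    by (rule Y_minus_b_factor)
  obtain S0 where S0: "S - [:\<omega>:] = T * S0" by (rule S_minus_\<omega>)
  define N where "N = S0 * (S - [:\<omega> ^ 2:])"
  have "S ^ 2 + S + 1 = T * N" by (simp only: cyclotomic_factor S0 N_def mult.assoc)
  then have Nq: "[:S ^ 2 + S + 1:] ^ q = [:T ^ q:] * [:N ^ q:]"
    by (simp only: poly_const_pow power_mult_distrib) (simp add: poly_const_pow)
  have "q \<noteq> 0" using q_mod_3 by auto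
  then have fq: "?f ^ q = ?f * ?f ^ (q - 1)" by (simp flip: power_Suc)
  have frob: "((Y - B) * G) ^ q = ?f ^ q - [:S ^ 2 + S + 1:] ^ q"
    unfolding G(1) by (rule frobenius) simp
  have "G ^ q * (Y - [:y_approx:]) - [:T ^ q:] * (B * Y * [:N ^ q:])
      = ?f * (B * G ^ q - B * Y * ?f ^ (q - 1))"
  proof -
    have "g * (bb * f - bb * y * z) - t * (bb * y * n) = f * (bb * g - bb * y * f')"
      if "z * g = f * f' - t * n" for g bb f y z t n f' :: "'k poly poly"
    proof -
      have "g * (bb * f - bb * y * z) - t * (bb * y * n) = bb * f * g - bb * y * (z * g + t * n)"
        by (simp add: algebra_simps)
      also have "\<dots> = f * (bb * g - bb * y * f')" using that by (simp add: algebra_simps)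
      finally show ?thesis .
    qed
    then show ?thesis using frob unfolding Y_minus_y_approx Nq fq power_mult_distrib .
  qed
  then have "curve_bipoly q dvd G ^ q * (Y - [:y_approx:]) - [:T ^ q:] * (B * Y * [:N ^ q:])"
    by (metis dvd_triv_left)
  moreover have "ev2 (G ^ q) a b \<noteq> 0" using G(2) by (simp add: ev2.hom_power)
  ultimately show ?thesis using that by blast
qed

definition Y_over_b :: "'k poly poly" where "Y_over_b = monom [:inverse b:] 1"

lemma poly_Y_over_b: "poly Y_over_b y_approx = - (S ^ 2 + S)"
  using b_nonzero by (simp add: Y_over_b_def y_approx_def poly_monom)

text \<open>The coefficients are chosen so that \<open>c_k + s d_k = (s - \<omega>)^k\<close> once \<open>y/b\<close> is replaced
  by \<open>-(s^2 + s)\<close>, i.e. \<open>s^2\<close> is eliminated in favour of \<open>y\<close>, which has the smaller pole order.\<close>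
fun cpoly :: "nat \<Rightarrow> 'k poly poly" and dpoly :: "nat \<Rightarrow> 'k poly poly" where
  "cpoly 0 = 1"
| "cpoly (Suc k) = - [:[:\<omega>:]:] * cpoly k - Y_over_b * dpoly k"
| "dpoly 0 = 0"
| "dpoly (Suc k) = cpoly k + [:[:\<omega> ^ 2:]:] * dpoly k"

lemma \<omega>2_poly: "[:\<omega> ^ 2:] = - 1 - [:\<omega>:]"
  using cube_root by (simp add: one_pCons eq_neg_iff_add_eq_0 algebra_simps)

lemma cpoly_dpoly_at_y_approx:
  "poly (cpoly k) y_approx + S * poly (dpoly k) y_approx = (S - [:\<omega>:]) ^ k"
proof (induction k)
  case (Suc k)
  have step: "(- w * c - (- (s ^ 2 + s)) * d) + s * (c + (- 1 - w) * d) = (s - w) * (c + s * d)"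
    for s w c d :: "'k poly"
    by (simp add: algebra_simps power2_eq_square)
  have "poly (cpoly (Suc k)) y_approx + S * poly (dpoly (Suc k)) y_approx =
      (- [:\<omega>:] * poly (cpoly k) y_approx - poly Y_over_b y_approx * poly (dpoly k) y_approx)
      + S * (poly (cpoly k) y_approx + [:\<omega> ^ 2:] * poly (dpoly k) y_approx)"
    by simp
  also have "\<dots> = (S - [:\<omega>:]) * (poly (cpoly k) y_approx + S * poly (dpoly k) y_approx)"
    unfolding poly_Y_over_b \<omega>2_poly by (rule step)
  finally show ?case using Suc.IH by simp
qed simp

lemma T_power_split: "j \<le> q \<Longrightarrow> T ^ q = T ^ j * T ^ (q - j)"
  by (metis le_add_diff_inverse power_add)

definition gfun :: "nat \<Rightarrow> 'k poly poly" where
  "gfun k = (1 - Y_over_b) * cpoly k + ([:Polynomial.smult (inverse a) X:] - Y_over_b) * dpoly k"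

lemma gfun_at_y_approx:
  assumes "Suc k < q"
  obtains P where "poly (gfun k) y_approx = T ^ Suc k * P" and "poly P a \<noteq> 0"
proof -
  obtain S0 where S0: "S - [:\<omega>:] = T * S0" "poly S0 a \<noteq> 0" by (rule S_minus_\<omega>)
  define c d where "c = poly (cpoly k) y_approx" and "d = poly (dpoly k) y_approx"
  have "poly (gfun k) y_approx =
      (S ^ 2 + S + 1) * (c + S * d) + (Polynomial.smult (inverse a) X - S ^ 3) * d"
    by (simp add: gfun_def poly_Y_over_b c_def d_def algebra_simps power2_eq_square power3_eq_cube)
  also have "\<dots> = (S - [:\<omega>:]) ^ Suc k * (S - [:\<omega> ^ 2:]) - X * T ^ q * d"
  proof -
    have "p * r * p ^ k + - z * d = p ^ Suc k * r - z * d" for p r z :: "'k poly"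
      by (simp add: algebra_simps)
    then show ?thesis
      unfolding cyclotomic_factor X_div_a_minus_S_cube c_def d_def cpoly_dpoly_at_y_approx .
  qed
  also have "\<dots> = T ^ Suc k * (S0 ^ Suc k * (S - [:\<omega> ^ 2:]) - X * T ^ (q - Suc k) * d)"
  proof -
    have factor: "(t * s0) ^ n * r - x * (t ^ n * t') * d = t ^ n * (s0 ^ n * r - x * t' * d)"
      for t s0 r x t' :: "'k poly" and n
      by (simp add: power_mult_distrib algebra_simps)
    have "T ^ q = T ^ Suc k * T ^ (q - Suc k)" using assms by (intro T_power_split) simp
    then show ?thesis unfolding S0(1) by (simp only: factor)
  qed
  finally have "poly (gfun k) y_approx = \<dots>" .
  moreover have "poly (S0 ^ Suc k * (S - [:\<omega> ^ 2:]) - X * T ^ (q - Suc k) * d) a \<noteq> 0"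
    using assms S0(2) \<omega>_ne_\<omega>2 by (simp add: power_0_left)
  ultimately show ?thesis by (rule that)
qed

lemma val_at_gfun:
  assumes "Suc k < q"
  shows "val_at q a b (lift2 (gfun k)) (Suc k)"
proof -
  obtain P where P: "poly (gfun k) y_approx = T ^ Suc k * P" "poly P a \<noteq> 0"
    using gfun_at_y_approx[OF assms] by blast
  obtain G E where G: "ev2 G a b \<noteq> 0"
    and GE: "curve_bipoly q dvd G * (Y - [:y_approx:]) - [:T ^ q:] * E"
    by (rule y_approx_error)
  define H where "H = synthetic_div (gfun k) y_approx"
  have g: "gfun k = (Y - [:y_approx:]) * H + [:T ^ Suc k * P:]"
    using synthetic_div_correct'[of y_approx "gfun k"] by (simp add: H_def Y_def P(1))
  define U where "U = G * [:P:] + [:T ^ (q - Suc k):] * E * H"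
  have "[:T ^ q:] = [:T ^ Suc k:] * [:T ^ (q - Suc k):]"
    using assms T_power_split[of "Suc k"] by simp
  then have "G * gfun k - [:T ^ Suc k:] * U = (G * (Y - [:y_approx:]) - [:T ^ q:] * E) * H"
    unfolding g U_def by (simp add: algebra_simps)
  then have "curve_bipoly q dvd G * gfun k - [:[:- a, 1:] ^ Suc k:] * U"
    using GE by (simp add: T_def)
  moreover have "ev2 U a b \<noteq> 0"
    using assms G P(2) by (simp add: U_def ev2.hom_add ev2.hom_mult power_0_left)
  ultimately show ?thesis
    using G by (intro val_at_lift2I[OF on_curve])
qed

lemma poly_pole_le_Y_over_b: "poly_pole_le 2 (lift2 Y_over_b)"
  using poly_pole_le_lift2_monom[of "[:inverse b:]" 0 1] by (simp add: Y_over_b_def)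

lemma poly_pole_le_cpoly_dpoly:
  "poly_pole_le (int k) (lift2 (cpoly k)) \<and> poly_pole_le (int k - 1) (lift2 (dpoly k))"
proof (induction k)
  case 0
  show ?case by (simp add: poly_pole_le_1)
next
  case (Suc k)
  have const: "poly_pole_le 0 (lift2 [:[:c:]:])" for c
    using poly_pole_le_lift2_const[of "[:c:]" 0] by simp
  have "poly_pole_le (0 + int k) (lift2 [:[:\<omega>:]:] * lift2 (cpoly k))"
    and "poly_pole_le (2 + (int k - 1)) (lift2 Y_over_b * lift2 (dpoly k))"
    and "poly_pole_le (0 + (int k - 1)) (lift2 [:[:\<omega> ^ 2:]:] * lift2 (dpoly k))"
    using Suc.IH by (intro poly_pole_le_mult const poly_pole_le_Y_over_b; simp)+
  then show ?case
    unfolding cpoly.simps dpoly.simps lift2.hom_add lift2.hom_minus lift2.hom_mult lift2.hom_uminus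
      mult_minus_left
    using Suc.IH by (auto intro!: poly_pole_le_add poly_pole_le_diff poly_pole_le_uminus
        elim!: poly_pole_le_mono)
qed

lemma poly_pole_le_gfun: "poly_pole_le (int k + 2) (lift2 (gfun k))"
proof -
  have "poly_pole_le 3 (lift2 [:Polynomial.smult (inverse a) X:])"
    using poly_pole_le_lift2_const[of "Polynomial.smult (inverse a) X" 1] by (simp add: X_def)
  then have "poly_pole_le 3 (lift2 [:Polynomial.smult (inverse a) X:] - lift2 Y_over_b)"
    using poly_pole_le_mono[OF poly_pole_le_Y_over_b] by (intro poly_pole_le_diff) simp_all
  moreover have "poly_pole_le 2 (1 - lift2 Y_over_b)"
    using poly_pole_le_mono[OF poly_pole_le_1, of 2] by (intro poly_pole_le_diff poly_pole_le_Y_over_b) simp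
  ultimately have "poly_pole_le (2 + int k) ((1 - lift2 Y_over_b) * lift2 (cpoly k))"
    and "poly_pole_le (3 + (int k - 1))
      ((lift2 [:Polynomial.smult (inverse a) X:] - lift2 Y_over_b) * lift2 (dpoly k))"
    using poly_pole_le_cpoly_dpoly[of k] by (intro poly_pole_le_mult; simp)+
  then show ?thesis
    unfolding gfun_def lift2.hom_add lift2.hom_minus lift2.hom_mult lift2.hom_one
    by (auto intro!: poly_pole_le_add elim!: poly_pole_le_mono)
qed

end

theorem theorem3p10:
  fixes q p e :: nat and a b :: "'k::alg_closed_field"
  assumes "prime p" and "e \<ge> 1" and "q = p ^ e" and "CHAR('k) = p"
    and "q mod 3 = 2"
    and "a \<noteq> 0"
    and "b ^ (q + 1) + a ^ (2 * mm q) + a ^ (mm q) = 0"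
    and "a ^ (mm q) \<noteq> -1"
    and "(a ^ mm q / (1 + a ^ mm q)) ^ 2 - a ^ mm q / (1 + a ^ mm q) + 1 = 0"
  shows "\<forall>i::nat. 1 \<le> i \<and> i \<le> mm q - 2 \<longrightarrow>
           (\<exists>g. in_L3 q (i + 1) g \<and> val_at q a b g (3 * i + 2))"
proof (intro allI impI)
  fix i :: nat
  assume i: "1 \<le> i \<and> i \<le> mm q - 2"
  interpret cube_root_point q e a b
    using assms cube_root_if_alpha[OF assms(8,9)] by unfold_locales simp_all
  have "Suc (3 * i + 1) < q" using i three_m by linarith
  then have "val_at q a b (lift2 (gfun (3 * i + 1))) (3 * i + 2)"
    using val_at_gfun by simp
  moreover have "in_L3 q (i + 1) (lift2 (gfun (3 * i + 1)))"
    using poly_pole_le_gfun[of "3 * i + 1"] by (intro in_L3_lift2I) simp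
  ultimately show "\<exists>g. in_L3 q (i + 1) g \<and> val_at q a b g (3 * i + 2)" by blast
qed

end
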